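(* Let $u^{(1)},\ldots,u^{(k)}\in(\mathbb{N}\cup\{0\})^m$ and put $M:=\bigcup_{j=1}^k\{x\in\mathbb{R}^m:0\leq x\leq u^{(j)}\}$ (entrywise order). Then $M\cap\mathbb{Z}^m$ is the unique subset $C\subseteq M$ with $|C|=|M\cap\mathbb{Z}^m|$ whose minimum distance $\min\{\|x-y\|_\infty:x,y\in C,x\neq y\}$ equals $1$. *)

theory Defs
  imports "HOL-Analysis.Analysis"
begin

definition int_lattice :: "(real^'m) set" where
  "int_lattice = {x. \<forall>i. x $ i \<in> \<int>}"

definition box_union :: "nat \<Rightarrow> (nat \<Rightarrow> real^'m) \<Rightarrow> (real^'m) set" where
  "box_union k u = (\<Union>j\<in>{1..k}. {x. 0 \<le> x \<and> x \<le> u j})"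

definition min_dist_inf :: "(real^'m) set \<Rightarrow> real" where
  "min_dist_inf C = Min {infnorm (x - y) | x y. x \<in> C \<and> y \<in> C \<and> x \<noteq> y}"

end

theory Submission
  imports Defs
begin

text \<open>
  Rounding every coordinate down, resp. up, maps M into M \<inter> \<int>^m, because the boxes have integer
  corners; on a set C whose distinct points have sup-distance at least 1 both roundings are
  injective. If moreover |C| = |M \<inter> \<int>^m|, both are bijections C \<rightarrow> M \<inter> \<int>^m, so for every
  coordinate i the sum of the rounded-down and the sum of the rounded-up i-th coordinates over C
  both equal the sum of the i-th coordinates over M \<inter> \<int>^m. As floor \<le> ceiling termwise, they agree
  on every point of C, hence C \<subseteq> \<int>^m and C = M \<inter> \<int>^m.
\<close>

lemma infnorm_less_cart: "infnorm (x::real^'n) < r \<longleftrightarrow> (\<forall>i. \<bar>x $ i\<bar> < r)"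
proof -
  have "{\<bar>x $ i\<bar> |i. i \<in> UNIV} = range (\<lambda>i. \<bar>x $ i\<bar>)" by auto
  then show ?thesis by (simp add: infnorm_cart cSup_eq_Max)
qed

lemma infnorm_axis_1: "infnorm (axis i (1::real) :: real^'n) = 1"
proof (rule antisym)
  show "infnorm (axis i (1::real) :: real^'n) \<le> 1"
    using infnorm_le_norm[of "axis i (1::real) :: real^'n"] by simp
  show "1 \<le> infnorm (axis i (1::real) :: real^'n)"
    using component_le_infnorm_cart[of "axis i (1::real) :: real^'n" i] by simp
qed

lemma floor_eq_ceiling_iff: "\<lfloor>x\<rfloor> = \<lceil>x\<rceil> \<longleftrightarrow> (x::'a::floor_ceiling) \<in> \<int>"
proof
  assume "\<lfloor>x\<rfloor> = \<lceil>x\<rceil>"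
  then have "x = of_int \<lfloor>x\<rfloor>" by (simp add: ceiling_altdef split: if_splits)
  then show "x \<in> \<int>" by (metis Ints_of_int)
qed (auto elim: Ints_cases)

lemma bij_betw_if_inj_on_card_eq:
  assumes "inj_on f A" "f ` A \<subseteq> B" "finite B" "card A = card B"
  shows "bij_betw f A B"
  using assms card_image card_subset_eq unfolding bij_betw_def by metis

definition unit_separated :: "(real^'m) set \<Rightarrow> bool" where
  "unit_separated C \<longleftrightarrow> (\<forall>x\<in>C. \<forall>y\<in>C. x \<noteq> y \<longrightarrow> 1 \<le> infnorm (x - y))"

lemma unit_separated_subset: "unit_separated C \<Longrightarrow> D \<subseteq> C \<Longrightarrow> unit_separated D"
  unfolding unit_separated_def by blast

lemma unit_separated_int_lattice: "unit_separated int_lattice"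
  unfolding unit_separated_def
proof (intro ballI impI)
  fix x y :: "real^'m" assume "x \<in> int_lattice" "y \<in> int_lattice" "x \<noteq> y"
  then obtain i where "x $ i \<noteq> y $ i" "x $ i \<in> \<int>" "y $ i \<in> \<int>"
    by (auto simp: int_lattice_def vec_eq_iff)
  then have "1 \<le> \<bar>(x - y) $ i\<bar>"
    by (auto elim!: Ints_cases simp flip: of_int_diff)
  also have "\<dots> \<le> infnorm (x - y)" by (rule component_le_infnorm_cart)
  finally show "1 \<le> infnorm (x - y)" .
qed

lemma uniform_discrete_if_unit_separated:
  assumes "unit_separated C" shows "uniform_discrete C"
  unfolding uniform_discrete_def
proof (intro exI[of _ 1] conjI ballI impI)
  fix x y assume "x \<in> C" "y \<in> C" "dist x y < 1"
  moreover have "infnorm (x - y) \<le> dist x y" by (simp add: dist_norm infnorm_le_norm)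
  ultimately show "x = y" using assms unfolding unit_separated_def by force
qed simp

lemma finite_int_lattice_Int: "bounded S \<Longrightarrow> finite (S \<inter> int_lattice)"
  using uniform_discrete_if_unit_separated[OF unit_separated_subset[OF unit_separated_int_lattice]]
    uniform_discrete_finite_iff by blast

definition vec_floor :: "real^'m \<Rightarrow> real^'m" where
  "vec_floor x = (\<chi> i. of_int \<lfloor>x $ i\<rfloor>)"

definition vec_ceiling :: "real^'m \<Rightarrow> real^'m" where
  "vec_ceiling x = (\<chi> i. of_int \<lceil>x $ i\<rceil>)"

lemma vec_floor_in_int_lattice: "vec_floor x \<in> int_lattice"
  by (simp add: vec_floor_def int_lattice_def)

lemma vec_ceiling_in_int_lattice: "vec_ceiling x \<in> int_lattice"
  by (simp add: vec_ceiling_def int_lattice_def)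

lemma vec_floor_mem_box:
  assumes "a \<in> int_lattice" "x \<in> {a..b}" shows "vec_floor x \<in> {a..b}"
proof -
  have x: "a $ i \<le> x $ i" "x $ i \<le> b $ i" for i
    using assms(2) by (simp_all add: less_eq_vec_def)
  have "a $ i \<le> of_int \<lfloor>x $ i\<rfloor>" for i
  proof -
    obtain n where "a $ i = of_int n" using assms(1) by (auto simp: int_lattice_def elim: Ints_cases)
    with x(1)[of i] show ?thesis by (simp add: le_floor_iff)
  qed
  moreover have "of_int \<lfloor>x $ i\<rfloor> \<le> b $ i" for i
    using x(2)[of i] of_int_floor_le[of "x $ i"] by linarith
  ultimately show ?thesis by (simp add: vec_floor_def less_eq_vec_def)
qed

lemma vec_ceiling_mem_box:
  assumes "b \<in> int_lattice" "x \<in> {a..b}" shows "vec_ceiling x \<in> {a..b}"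
proof -
  have x: "a $ i \<le> x $ i" "x $ i \<le> b $ i" for i
    using assms(2) by (simp_all add: less_eq_vec_def)
  have "of_int \<lceil>x $ i\<rceil> \<le> b $ i" for i
  proof -
    obtain n where "b $ i = of_int n" using assms(1) by (auto simp: int_lattice_def elim: Ints_cases)
    with x(2)[of i] show ?thesis by (simp add: ceiling_le_iff)
  qed
  moreover have "a $ i \<le> of_int \<lceil>x $ i\<rceil>" for i
    using x(1)[of i] le_of_int_ceiling[of "x $ i"] by linarith
  ultimately show ?thesis by (simp add: vec_ceiling_def less_eq_vec_def)
qed

lemma inj_on_componentwise_rounding:
  fixes r :: "real \<Rightarrow> int"
  assumes close: "\<And>a b. r a = r b \<Longrightarrow> \<bar>a - b\<bar> < 1" and "unit_separated C"
  shows "inj_on (\<lambda>x. \<chi> i. of_int (r (x $ i)) :: real^'m) C"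
proof
  fix x y assume "x \<in> C" "y \<in> C" and "(\<chi> i. of_int (r (x $ i)) :: real^'m) = (\<chi> i. of_int (r (y $ i)))"
  then have "\<bar>(x - y) $ i\<bar> < 1" for i by (simp add: vec_eq_iff close)
  then have "infnorm (x - y) < 1" by (simp add: infnorm_less_cart)
  with \<open>x \<in> C\<close> \<open>y \<in> C\<close> \<open>unit_separated C\<close> show "x = y"
    unfolding unit_separated_def by force
qed

lemma inj_on_vec_floor: "unit_separated C \<Longrightarrow> inj_on vec_floor C"
  unfolding vec_floor_def
proof (rule inj_on_componentwise_rounding)
  show "\<bar>a - b\<bar> < 1" if "\<lfloor>a\<rfloor> = \<lfloor>b\<rfloor>" for a b :: real
    using that floor_correct[of a] floor_correct[of b] unfolding abs_less_iff by linarith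
qed

lemma inj_on_vec_ceiling: "unit_separated C \<Longrightarrow> inj_on vec_ceiling C"
  unfolding vec_ceiling_def
proof (rule inj_on_componentwise_rounding)
  show "\<bar>a - b\<bar> < 1" if "\<lceil>a\<rceil> = \<lceil>b\<rceil>" for a b :: real
    using that ceiling_correct[of a] ceiling_correct[of b] unfolding abs_less_iff by linarith
qed

lemma subset_int_lattice_if_bij_betw_floor_ceiling:
  assumes "finite L" "bij_betw vec_floor C L" "bij_betw vec_ceiling C L"
  shows "C \<subseteq> int_lattice"
proof
  fix x assume "x \<in> C"
  have "vec_floor x $ i = vec_ceiling x $ i" for i
  proof (rule sum_mono_inv[OF _ _ \<open>x \<in> C\<close>])
    have "(\<Sum>y\<in>C. vec_floor y $ i) = (\<Sum>z\<in>L. z $ i)"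
      by (rule sum.reindex_bij_betw[OF assms(2)])
    also have "\<dots> = (\<Sum>y\<in>C. vec_ceiling y $ i)"
      by (rule sum.reindex_bij_betw[OF assms(3), symmetric])
    finally show "(\<Sum>y\<in>C. vec_floor y $ i) = (\<Sum>y\<in>C. vec_ceiling y $ i)" .
    show "vec_floor y $ i \<le> vec_ceiling y $ i" for y
      by (simp add: vec_floor_def vec_ceiling_def)
    show "finite C"
      using assms(1,2) bij_betw_finite by blast
  qed
  then show "x \<in> int_lattice"
    by (simp add: vec_floor_def vec_ceiling_def int_lattice_def floor_eq_ceiling_iff)
qed

lemma unit_separated_eq_int_points:
  fixes S C :: "(real^'m) set"
  assumes fin: "finite (S \<inter> int_lattice)"
    and floor_closed: "\<And>x. x \<in> S \<Longrightarrow> vec_floor x \<in> S"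
    and ceiling_closed: "\<And>x. x \<in> S \<Longrightarrow> vec_ceiling x \<in> S"
    and "C \<subseteq> S" "unit_separated C" "card C = card (S \<inter> int_lattice)"
  shows "C = S \<inter> int_lattice"
proof -
  have "bij_betw vec_floor C (S \<inter> int_lattice)"
    using assms inj_on_vec_floor vec_floor_in_int_lattice
    by (intro bij_betw_if_inj_on_card_eq) auto
  moreover have "bij_betw vec_ceiling C (S \<inter> int_lattice)"
    using assms inj_on_vec_ceiling vec_ceiling_in_int_lattice
    by (intro bij_betw_if_inj_on_card_eq) auto
  ultimately have "C \<subseteq> S \<inter> int_lattice"
    using subset_int_lattice_if_bij_betw_floor_ceiling fin \<open>C \<subseteq> S\<close> by blast
  then show ?thesis using card_subset_eq[OF fin] \<open>card C = _\<close> by blast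
qed

lemma finite_infnorm_distances:
  assumes "finite C"
  shows "finite {infnorm (x - y) | x y. x \<in> C \<and> y \<in> C \<and> x \<noteq> y}"
proof -
  have "{infnorm (x - y) | x y. x \<in> C \<and> y \<in> C \<and> x \<noteq> y} \<subseteq> (\<lambda>(x, y). infnorm (x - y)) ` (C \<times> C)"
    by auto
  then show ?thesis using assms finite_subset by blast
qed

lemma min_dist_inf_le:
  assumes "finite C" "x \<in> C" "y \<in> C" "x \<noteq> y"
  shows "min_dist_inf C \<le> infnorm (x - y)"
  unfolding min_dist_inf_def using assms by (intro Min_le finite_infnorm_distances) auto

lemma min_dist_inf_eqI:
  assumes "finite C" "x \<in> C" "y \<in> C" "x \<noteq> y" "infnorm (x - y) = d"
    and "\<And>x y. x \<in> C \<Longrightarrow> y \<in> C \<Longrightarrow> x \<noteq> y \<Longrightarrow> d \<le> infnorm (x - y)"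
  shows "min_dist_inf C = d"
  unfolding min_dist_inf_def using assms
  by (intro antisym Min.boundedI Min_le finite_infnorm_distances) auto

lemma unit_separated_if_min_dist_inf:
  "finite C \<Longrightarrow> 1 \<le> min_dist_inf C \<Longrightarrow> unit_separated C"
  unfolding unit_separated_def using min_dist_inf_le order_trans by blast

lemma min_dist_inf_int_lattice:
  assumes "finite L" "L \<subseteq> int_lattice" "x \<in> L" "y \<in> L" "infnorm (x - y) = 1"
  shows "min_dist_inf L = 1"
proof (rule min_dist_inf_eqI[OF assms(1,3,4) _ assms(5)])
  show "x \<noteq> y" using assms(5) by (auto simp: infnorm_0)
  show "1 \<le> infnorm (a - b)" if "a \<in> L" "b \<in> L" "a \<noteq> b" for a b
    using that assms(2) unit_separated_int_lattice unfolding unit_separated_def by blast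
qed

lemma box_union_eq: "box_union k u = (\<Union>j\<in>{1..k}. {0..u j})"
  by (auto simp: box_union_def)

lemma bounded_box_union: "bounded (box_union k u)"
  unfolding box_union_eq interval_cbox_cart by (intro bounded_UN) auto

lemma vec_floor_mem_box_union: "x \<in> box_union k u \<Longrightarrow> vec_floor x \<in> box_union k u"
  using vec_floor_mem_box[of 0] unfolding box_union_eq by (auto simp: int_lattice_def)

lemma vec_ceiling_mem_box_union:
  assumes "\<And>j. j \<in> {1..k} \<Longrightarrow> u j \<in> int_lattice" "x \<in> box_union k u"
  shows "vec_ceiling x \<in> box_union k u"
  using assms vec_ceiling_mem_box unfolding box_union_eq by blast

theorem lemma4p2:
  fixes u :: "nat \<Rightarrow> real^'m" and k :: nat
  assumes "\<And>j i. j \<in> {1..k} \<Longrightarrow> u j $ i \<in> \<nat>"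
    and "\<exists>j\<in>{1..k}. u j \<noteq> 0"
  shows "\<forall>C. (C \<subseteq> box_union k u \<and> card C = card (box_union k u \<inter> int_lattice)
                \<and> min_dist_inf C = 1)
             \<longleftrightarrow> C = box_union k u \<inter> int_lattice"
proof -
  define L where "L = box_union k u \<inter> int_lattice"
  have "u j $ i \<in> \<int> \<and> 0 \<le> u j $ i" if "j \<in> {1..k}" for j i
    using assms(1)[OF that, of i] by (auto elim!: Nats_cases)
  then have corner: "u j \<in> int_lattice" "0 \<le> u j" if "j \<in> {1..k}" for j
    using that by (auto simp: int_lattice_def less_eq_vec_def)
  have "finite L" unfolding L_def by (rule finite_int_lattice_Int[OF bounded_box_union])
  obtain j i where j: "j \<in> {1..k}" and "u j $ i \<noteq> 0"
    using assms(2) by (metis vec_eq_iff zero_index)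
  then have "1 \<le> u j $ i"
    using assms(1)[OF j, of i] by (auto elim!: Nats_cases)
  then have "0 \<in> L" "axis i 1 \<in> L"
    using j corner unfolding L_def box_union_eq
    by (auto simp: int_lattice_def less_eq_vec_def axis_def)
  then have "min_dist_inf L = 1"
    using \<open>finite L\<close>
    by (intro min_dist_inf_int_lattice[of L "axis i 1" 0]) (auto simp: L_def infnorm_axis_1)
  moreover have "C = L"
    if "C \<subseteq> box_union k u" "card C = card L" "min_dist_inf C = 1" for C
  proof -
    \<comment> \<open>min_dist_inf is a Min, which says nothing about infinite sets\<close>
    have "finite C" using that(2) \<open>0 \<in> L\<close> \<open>finite L\<close> by (metis card_gt_0_iff empty_iff)
    then have "unit_separated C"
      using that(3) by (simp add: unit_separated_if_min_dist_inf)
    then show ?thesis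
      using that(1,2) \<open>finite L\<close> corner(1) unfolding L_def
      by (intro unit_separated_eq_int_points vec_floor_mem_box_union vec_ceiling_mem_box_union)
  qed
  ultimately show ?thesis unfolding L_def by blast
qed

end
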